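(* Let $\mathcal G$ be a class of measurable functions $g:\mathcal Z\to[0,1]$. Fix constants $c>c_2>0$ and $h\in(0,1]$, let $m\ge1$ and $t\ge\frac{(1+c_2)(1+c_2h^2)}{mc_2h^2}$, and put $c'=\frac{c+c_2}{2}$, $c''=\frac{c-c_2}{2}$. Let $S=(z_1,\dots,z_m)\sim\mathcal D^m$ and let $\epsilon_1,\dots,\epsilon_m$ be i.i.d. Rademacher random variables independent of $S$. Then $$\frac14\,\mathbb P_S\Big(\sup_{g\in\mathcal G}\big[\mathcal L_{\mathcal D}(g)-(1+c)\hat{\mathcal L}_S(g)+c(1-h^2)\hat{\mathcal L}_S(g^2)\big]\ge t\Big)$$ $$\le\mathbb P_{S,\epsilon}\Big(\sup_{g\in\mathcal G}\Big[\frac1m\sum_{i=1}^m\epsilon_i\big((1+c')g(z_i)-c'(1-h^2)g(z_i)^2\big)-c''\,\hat{\mathcal L}_S\big(g-(1-h^2)g^2\big)\Big]\ge\frac t4\Big).$$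
   Context: $\mathcal D$ is a probability distribution on a measurable space $\mathcal Z$ and $S$ is an i.i.d. sample of size $m$ from $\mathcal D$. For a measurable bounded $g:\mathcal Z\to\mathbb R$, $\mathcal L_{\mathcal D}(g)=\mathbb E_{z\sim\mathcal D}g(z)$ and $\hat{\mathcal L}_S(g)=\frac1m\sum_{i=1}^m g(z_i)$; $g^2$ is the function $z\mapsto g(z)^2$. A Rademacher random variable takes values $\pm1$ each with probability $1/2$. The suprema are assumed to be measurable random variables. *)

theory Defs
  imports "HOL-Probability.Probability"
begin

definition sample_measure :: "'a measure \<Rightarrow> nat \<Rightarrow> (nat \<Rightarrow> 'a) measure" where
  "sample_measure D m = PiM {..<m} (\<lambda>_. D)"

definition rademacher_measure :: "nat \<Rightarrow> (nat \<Rightarrow> real) measure" where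
  "rademacher_measure m = PiM {..<m} (\<lambda>_. measure_pmf (pmf_of_set {-1, 1::real}))"

definition risk :: "'a measure \<Rightarrow> ('a \<Rightarrow> real) \<Rightarrow> real" where
  "risk D g = integral\<^sup>L D g"

definition emp_risk :: "nat \<Rightarrow> (nat \<Rightarrow> 'a) \<Rightarrow> ('a \<Rightarrow> real) \<Rightarrow> real" where
  "emp_risk m S g = (\<Sum>i<m. g (S i)) / real m"

end

(*
  Symmetrization with a ghost sample S'.  Write a_k g = (1 + k) g - k (1 - h^2) g^2, so that the
  left-hand event says L_D(g) - L_S(a_c g) >= t for some g.  For a fixed g, a_c2 g dominates
  X = g + c2 h^2 g^2 (as g^2 <= g), whose variance is at most (1 + c2 h^2)^2 E g^2; Chebyshev's
  inequality, AM-GM and the lower bound on t then show that with probability at least 1/2 the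
  ghost sample satisfies L_S'(a_c2 g) >= L_D(g) - t/2, and on that event
  L_S'(a_c2 g) - L_S(a_c g) >= t/2.  Since a_c2 = b - c'' f and a_c = b + c'' f for
  b = (1 + c') g - c' (1 - h^2) g^2 and f = g - (1 - h^2) g^2, for every sign vector eps this
  difference is the sum of the Rademacher statistics at (U, eps) and at (V, -eps), where U and V
  take z'_i instead of z_i exactly where eps_i = 1, resp. eps_i = -1.  One of the two is at least
  t/4, and both maps (eps, S, S') |-> (U, eps) and (eps, S, S') |-> (V, -eps) push the law of
  (eps, S, S') forward to the law of (S, eps), whence the factor 4 = 2 * 2.
*)
theory Submission
  imports Defs
begin

lemma emeasure_pair_measure_ge_section_bound:
  assumes "sigma_finite_measure N" and C: "C \<in> sets (M \<Otimes>\<^sub>M N)" and A: "A \<in> sets M"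
    and section_bound: "\<And>x. x \<in> A \<Longrightarrow> \<alpha> \<le> emeasure N (Pair x -` C)"
  shows "\<alpha> * emeasure M A \<le> emeasure (M \<Otimes>\<^sub>M N) C"
proof -
  have "\<alpha> * emeasure M A = (\<integral>\<^sup>+x. \<alpha> * indicator A x \<partial>M)"
    using A by (simp add: nn_integral_cmult_indicator)
  also have "\<dots> \<le> (\<integral>\<^sup>+x. emeasure N (Pair x -` C) \<partial>M)"
    by (intro nn_integral_mono) (auto simp: section_bound split: split_indicator)
  also have "\<dots> = emeasure (M \<Otimes>\<^sub>M N) C"
    using C by (simp add: sigma_finite_measure.emeasure_pair_measure_alt[OF assms(1)])
  finally show ?thesis .
qed

lemma emeasure_pair_measure_ge_iterated_section_bound:
  assumes M: "sigma_finite_measure M" and N: "sigma_finite_measure N"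
    and C: "C \<in> sets (R \<Otimes>\<^sub>M (M \<Otimes>\<^sub>M N))" and A: "A \<in> sets M" and E: "E \<in> sets R"
    and section_bound: "\<And>x e. x \<in> A \<Longrightarrow> e \<in> E \<Longrightarrow> \<alpha> \<le> emeasure N (Pair x -` Pair e -` C)"
  shows "\<alpha> * emeasure M A * emeasure R E \<le> emeasure (R \<Otimes>\<^sub>M (M \<Otimes>\<^sub>M N)) C"
proof -
  have "\<alpha> * emeasure M A \<le> emeasure (M \<Otimes>\<^sub>M N) (Pair e -` C)" if "e \<in> E" for e
    using section_bound[OF _ that]
    by (intro emeasure_pair_measure_ge_section_bound[OF N sets_Pair1[OF C] A])
  then show ?thesis
    by (intro emeasure_pair_measure_ge_section_bound[OF sigma_finite_pair_measure[OF M N] C E])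
qed

lemma distr_pair_measure_fiberwise:
  fixes f :: "'e \<Rightarrow> 'b \<Rightarrow> 'a" and \<sigma> :: "'e \<Rightarrow> 'e"
  assumes "sigma_finite_measure M" "sigma_finite_measure N" "sigma_finite_measure R"
    and F_meas: "(\<lambda>(e, x). (f e x, \<sigma> e)) \<in> measurable (R \<Otimes>\<^sub>M N) (M \<Otimes>\<^sub>M R)"
    and \<sigma>_meas: "\<sigma> \<in> measurable R R" and \<sigma>_distr: "distr R R \<sigma> = R"
    and f_distr: "\<And>e. e \<in> space R \<Longrightarrow> distr N M (f e) = M"
  shows "distr (R \<Otimes>\<^sub>M N) (M \<Otimes>\<^sub>M R) (\<lambda>(e, x). (f e x, \<sigma> e)) = M \<Otimes>\<^sub>M R"
    (is "distr _ _ ?F = _")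
proof (rule measure_eqI)
  interpret N: sigma_finite_measure N by fact
  interpret MR: pair_sigma_finite M R
    unfolding pair_sigma_finite_def using assms(1,3) by blast
  fix B assume "B \<in> sets (distr (R \<Otimes>\<^sub>M N) (M \<Otimes>\<^sub>M R) ?F)"
  then have B: "B \<in> sets (M \<Otimes>\<^sub>M R)" by simp
  have fiber: "emeasure N (Pair e -` (?F -` B \<inter> space (R \<Otimes>\<^sub>M N)))
      = emeasure M ((\<lambda>S. (S, \<sigma> e)) -` B)" if e: "e \<in> space R" for e
  proof -
    have "(\<lambda>x. (f e x, \<sigma> e)) \<in> measurable N (M \<Otimes>\<^sub>M R)"
      using measurable_Pair2[OF F_meas e] by simp
    then have f_meas: "f e \<in> measurable N M"
      using measurable_compose[OF _ measurable_fst] by fastforce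
    have "Pair e -` (?F -` B \<inter> space (R \<Otimes>\<^sub>M N)) = f e -` ((\<lambda>S. (S, \<sigma> e)) -` B) \<inter> space N"
      using e by (auto simp: space_pair_measure)
    also have "emeasure N \<dots> = emeasure (distr N M (f e)) ((\<lambda>S. (S, \<sigma> e)) -` B)"
      by (rule emeasure_distr[OF f_meas sets_Pair2[OF B], symmetric])
    finally show ?thesis
      by (simp add: f_distr[OF e])
  qed
  have "emeasure (distr (R \<Otimes>\<^sub>M N) (M \<Otimes>\<^sub>M R) ?F) B = emeasure (R \<Otimes>\<^sub>M N) (?F -` B \<inter> space (R \<Otimes>\<^sub>M N))"
    by (rule emeasure_distr[OF F_meas B])
  also have "\<dots> = (\<integral>\<^sup>+e. emeasure N (Pair e -` (?F -` B \<inter> space (R \<Otimes>\<^sub>M N))) \<partial>R)"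
    by (rule N.emeasure_pair_measure_alt) (rule measurable_sets[OF F_meas B])
  also have "\<dots> = (\<integral>\<^sup>+e. emeasure M ((\<lambda>S. (S, \<sigma> e)) -` B) \<partial>R)"
    by (rule nn_integral_cong) (rule fiber)
  also have "\<dots> = (\<integral>\<^sup>+e. emeasure M ((\<lambda>S. (S, e)) -` B) \<partial>distr R R \<sigma>)"
    by (subst nn_integral_distr[OF \<sigma>_meas]) (simp_all add: MR.measurable_emeasure_Pair2[OF B])
  also have "\<dots> = emeasure (M \<Otimes>\<^sub>M R) B"
    by (simp add: \<sigma>_distr MR.emeasure_pair_measure_alt2[OF B])
  finally show "emeasure (distr (R \<Otimes>\<^sub>M N) (M \<Otimes>\<^sub>M R) ?F) B = emeasure (M \<Otimes>\<^sub>M R) B" .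
qed simp

lemma measure_ereal_ge_le_of_slack:
  assumes "finite_measure N" and f: "f \<in> borel_measurable N"
    and slack: "\<And>\<delta>. \<delta> > 0 \<Longrightarrow> a \<le> measure N {x \<in> space N. ereal (s - \<delta>) \<le> f x}"
  shows "a \<le> measure N {x \<in> space N. ereal s \<le> f x}"
proof -
  define B where "B n = {x \<in> space N. ereal (s - inverse (real (Suc n))) \<le> f x}" for n
  have lim_s: "(\<lambda>n. ereal (s - inverse (real (Suc n)))) \<longlonglongrightarrow> ereal s"
    using tendsto_diff[OF tendsto_const LIMSEQ_inverse_real_of_nat, of s] by simp
  have "ereal s \<le> y \<longleftrightarrow> (\<forall>n. ereal (s - inverse (real (Suc n))) \<le> y)" for y
  proof
    show "ereal s \<le> y \<Longrightarrow> \<forall>n. ereal (s - inverse (real (Suc n))) \<le> y"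
      by (auto elim: order.trans[rotated])
    show "\<forall>n. ereal (s - inverse (real (Suc n))) \<le> y \<Longrightarrow> ereal s \<le> y"
      by (intro LIMSEQ_le_const2[OF lim_s]) auto
  qed
  then have "(\<Inter>n. B n) = {x \<in> space N. ereal s \<le> f x}"
    by (auto simp: B_def)
  moreover have "decseq B"
  proof (rule decseq_SucI)
    fix n
    have "ereal (s - inverse (real (Suc n))) \<le> ereal (s - inverse (real (Suc (Suc n))))"
      by (simp add: field_simps)
    then show "B (Suc n) \<subseteq> B n"
      unfolding B_def using order.trans by blast
  qed
  moreover have "range B \<subseteq> sets N"
    using f by (auto simp: B_def)
  ultimately have "(\<lambda>n. measure N (B n)) \<longlonglongrightarrow> measure N {x \<in> space N. ereal s \<le> f x}"
    using finite_measure.finite_Lim_measure_decseq[OF assms(1)] by metis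
  then show ?thesis
  proof (rule LIMSEQ_le_const, intro exI allI impI)
    show "a \<le> measure N (B n)" for n
      unfolding B_def by (rule slack) simp
  qed
qed

lemma distr_PiM_swap_coordinates:
  fixes D :: "'a measure" and I J :: "'i set"
  assumes D: "prob_space D" and fin: "finite I"
  shows "distr (PiM I (\<lambda>_. D) \<Otimes>\<^sub>M PiM I (\<lambda>_. D)) (PiM I (\<lambda>_. D))
           (\<lambda>(S, S'). \<lambda>i\<in>I. if i \<in> J then S' i else S i) = PiM I (\<lambda>_. D)"
    (is "distr (?M \<Otimes>\<^sub>M ?M) ?M ?swap = ?M")
proof -
  interpret product_prob_space "\<lambda>_::'i. D"
    by (rule product_prob_spaceI) (rule D)
  interpret P: prob_space ?M
    by (rule prob_space_PiM) (rule D)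
  have swap_meas: "?swap \<in> measurable (?M \<Otimes>\<^sub>M ?M) ?M"
    by measurable
  show ?thesis
  proof (rule PiM_eqI[OF fin])
    fix A assume A: "\<And>i. i \<in> I \<Longrightarrow> A i \<in> sets D"
    define A1 where "A1 i = (if i \<in> J then space D else A i)" for i
    define A2 where "A2 i = (if i \<in> J then A i else space D)" for i
    have A_space: "\<And>i. i \<in> I \<Longrightarrow> A i \<subseteq> space D"
      using A sets.sets_into_space by blast
    have A12: "\<And>i. i \<in> I \<Longrightarrow> A1 i \<in> sets D" "\<And>i. i \<in> I \<Longrightarrow> A2 i \<in> sets D"
      using A by (auto simp: A1_def A2_def)
    have "?swap -` PiE I A \<inter> space (?M \<Otimes>\<^sub>M ?M) = PiE I A1 \<times> PiE I A2"
      using A_space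
      by (auto simp: space_pair_measure space_PiM PiE_iff A1_def A2_def split: if_splits)
         (metis subsetD)+
    then have "emeasure (distr (?M \<Otimes>\<^sub>M ?M) ?M ?swap) (PiE I A)
        = emeasure (?M \<Otimes>\<^sub>M ?M) (PiE I A1 \<times> PiE I A2)"
      using A by (simp add: emeasure_distr[OF swap_meas] sets_PiM_I_finite fin)
    also have "\<dots> = emeasure ?M (PiE I A1) * emeasure ?M (PiE I A2)"
      using A12 by (intro P.emeasure_pair_measure_Times sets_PiM_I_finite fin) auto
    also have "\<dots> = (\<Prod>i\<in>I. emeasure D (A1 i) * emeasure D (A2 i))"
      using A12 by (simp add: emeasure_PiM fin prod.distrib)
    also have "\<dots> = (\<Prod>i\<in>I. emeasure D (A i))"
      by (intro prod.cong) (auto simp: A1_def A2_def prob_space.emeasure_space_1[OF D])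
    finally show "emeasure (distr (?M \<Otimes>\<^sub>M ?M) ?M ?swap) (PiE I A) = (\<Prod>i\<in>I. emeasure D (A i))" .
  qed simp
qed

lemma integral_PiM_sum_square:
  fixes D :: "'a measure" and Y :: "'a \<Rightarrow> real"
  assumes D: "prob_space D" and Y_meas[measurable]: "Y \<in> borel_measurable D"
    and Y_bound: "\<And>z. z \<in> space D \<Longrightarrow> \<bar>Y z\<bar> \<le> K" and Y_centered: "integral\<^sup>L D Y = 0"
  shows "(\<integral>S. (\<Sum>i<m. Y (S i))\<^sup>2 \<partial>PiM {..<m} (\<lambda>_. D)) = real m * (\<integral>z. (Y z)\<^sup>2 \<partial>D)"
proof -
  let ?M = "PiM {..<m} (\<lambda>_. D)"
  interpret product_prob_space "\<lambda>_::nat. D"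
    by (rule product_prob_spaceI) (rule D)
  interpret Pm: prob_space ?M
    by (rule prob_space_PiM) (rule D)
  have Y_int: "integrable D Y"
    using Y_bound D
    by (intro finite_measure.integrable_const_bound[where B=K] AE_I2) (auto simp: prob_space_def)
  have YY_int: "integrable ?M (\<lambda>S. Y (S i) * Y (S j))" if "i < m" "j < m" for i j
  proof (rule Pm.integrable_const_bound[where B="K * K"])
    show "AE S in ?M. norm (Y (S i) * Y (S j)) \<le> K * K"
      using that by (auto simp: abs_mult space_PiM PiE_iff intro!: AE_I2 mult_mono' Y_bound)
  qed (use that in simp)
  have cross: "(\<integral>S. Y (S i) * Y (S j) \<partial>?M) = (if i = j then \<integral>z. (Y z)\<^sup>2 \<partial>D else 0)"
    if ij: "i < m" "j < m" for i j
  proof (cases "i = j")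
    case True
    have "(\<integral>S. Y (S i) * Y (S j) \<partial>?M) = (\<integral>z. (Y z)\<^sup>2 \<partial>distr ?M D (\<lambda>S. S i))"
      using True ij by (subst integral_distr) (auto simp: power2_eq_square)
    also have "distr ?M D (\<lambda>S. S i) = D"
      using ij by (intro distr_PiM_component D) simp
    finally show ?thesis
      using True by simp
  next
    case False
    define f where "f k = (if k = i \<or> k = j then Y else (\<lambda>_. 1))" for k
    have "Y (S i) * Y (S j) = (\<Prod>k<m. f k (S k))" for S
    proof -
      have "(\<Prod>k<m. f k (S k)) = (\<Prod>k\<in>{i, j}. f k (S k))"
        by (rule prod.mono_neutral_right) (auto simp: f_def ij)
      then show ?thesis
        using False by (simp add: f_def)
    qed
    then have "(\<integral>S. Y (S i) * Y (S j) \<partial>?M) = (\<integral>S. (\<Prod>k<m. f k (S k)) \<partial>?M)"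
      by simp
    also have "\<dots> = (\<Prod>k<m. integral\<^sup>L D (f k))"
      by (rule product_integral_prod) (auto simp: f_def Y_int)
    also have "\<dots> = 0"
      using ij by (intro prod_zero) (auto simp: f_def Y_centered intro!: bexI[of _ i])
    finally show ?thesis
      using False by simp
  qed
  have "(\<integral>S. (\<Sum>i<m. Y (S i))\<^sup>2 \<partial>?M) = (\<integral>S. (\<Sum>i<m. \<Sum>j<m. Y (S i) * Y (S j)) \<partial>?M)"
    by (simp add: power2_eq_square sum_product)
  also have "\<dots> = (\<Sum>i<m. \<Sum>j<m. \<integral>S. Y (S i) * Y (S j) \<partial>?M)"
    by (subst Bochner_Integration.integral_sum)
       (auto intro!: sum.cong Bochner_Integration.integral_sum integrable_sum YY_int)
  also have "\<dots> = real m * (\<integral>z. (Y z)\<^sup>2 \<partial>D)"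
    by (simp add: cross)
  finally show ?thesis .
qed

section \<open>The ghost sample for a single function\<close>

lemma borel_measurable_sample_sum[measurable]:
  fixes f :: "'a \<Rightarrow> real"
  assumes [measurable]: "f \<in> borel_measurable D"
  shows "(\<lambda>S. \<Sum>i<m. f (S i)) \<in> borel_measurable (sample_measure D m)"
  unfolding sample_measure_def
proof (rule borel_measurable_sum)
  fix i assume "i \<in> {..<m}"
  then show "(\<lambda>S. f (S i)) \<in> borel_measurable (PiM {..<m} (\<lambda>_. D))"
    by measurable
qed

lemma (in prob_space) Chebyshev_inequality_sample_sum:
  fixes X :: "'a \<Rightarrow> real"
  assumes X_meas[measurable]: "X \<in> borel_measurable M"
    and X_bound: "\<And>z. z \<in> space M \<Longrightarrow> \<bar>X z\<bar> \<le> K" and "0 < s"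
  shows "measure (sample_measure M m) {S \<in> space (sample_measure M m).
           s \<le> \<bar>\<Sum>i<m. X (S i) - expectation X\<bar>} \<le> real m * variance X / s\<^sup>2"
proof -
  let ?S = "sample_measure M m"
  interpret S: prob_space ?S
    unfolding sample_measure_def by (rule prob_space_PiM) (rule prob_space_axioms)
  define Y where "Y z = X z - expectation X" for z
  have Y_meas[measurable]: "Y \<in> borel_measurable M"
    unfolding Y_def[abs_def] by measurable
  have X_int: "integrable M X"
    using X_bound by (intro integrable_const_bound[where B=K] AE_I2) auto
  moreover have "- K \<le> X z \<and> X z \<le> K" if "z \<in> space M" for z
    using X_bound[OF that] by auto
  ultimately have "- K \<le> expectation X" "expectation X \<le> K"
    by (auto intro!: integral_le_const integral_ge_const AE_I2)
  then have Y_bound: "\<bar>Y z\<bar> \<le> 2 * K" if "z \<in> space M" for z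
    using X_bound[OF that] by (auto simp: Y_def abs_le_iff)
  have sum_bound: "\<bar>\<Sum>i<m. Y (S i)\<bar> \<le> real m * (2 * K)" if "S \<in> space ?S" for S
  proof -
    have "\<bar>\<Sum>i<m. Y (S i)\<bar> \<le> (\<Sum>i<m. \<bar>Y (S i)\<bar>)"
      by (rule sum_abs)
    also have "\<dots> \<le> (\<Sum>i<m. 2 * K)"
      using that by (intro sum_mono Y_bound) (auto simp: sample_measure_def space_PiM)
    finally show ?thesis
      by simp
  qed
  have "(\<Sum>i<m. Y (S i))\<^sup>2 \<le> (real m * (2 * K))\<^sup>2" if "S \<in> space ?S" for S
    using power_mono[OF sum_bound[OF that] abs_ge_zero, of 2] by simp
  then have "integrable ?S (\<lambda>S. (\<Sum>i<m. Y (S i))\<^sup>2)"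
    by (intro S.integrable_const_bound[where B="(real m * (2 * K))\<^sup>2"] AE_I2) auto
  then have "measure ?S {S \<in> space ?S. s \<le> \<bar>\<Sum>i<m. Y (S i)\<bar>} \<le> (\<integral>S. (\<Sum>i<m. Y (S i))\<^sup>2 \<partial>?S) / s\<^sup>2"
    using \<open>0 < s\<close> by (intro S.second_moment_method) simp_all
  also have "\<dots> = real m * variance X / s\<^sup>2"
    using integral_PiM_sum_square[OF prob_space_axioms Y_meas Y_bound] X_int
    by (simp add: sample_measure_def Y_def prob_space)
  finally show ?thesis
    by (simp add: Y_def)
qed

lemma (in prob_space) variance_add_scaled_square_le:
  fixes g :: "'a \<Rightarrow> real" and k :: real
  assumes g_meas[measurable]: "g \<in> borel_measurable M"
    and g_range: "\<And>z. z \<in> space M \<Longrightarrow> 0 \<le> g z \<and> g z \<le> 1" and "0 \<le> k"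
  shows "variance (\<lambda>z. g z + k * (g z)\<^sup>2) \<le> (1 + k)\<^sup>2 * expectation (\<lambda>z. (g z)\<^sup>2)"
proof -
  define X where "X z = g z + k * (g z)\<^sup>2" for z
  have X_bound: "0 \<le> X z" "X z \<le> 1 + k" "(X z)\<^sup>2 \<le> (1 + k)\<^sup>2 * (g z)\<^sup>2" "(g z)\<^sup>2 \<le> 1"
    if "z \<in> space M" for z
  proof -
    have X_eq: "X z = g z * (1 + k * g z)"
      by (simp add: X_def power2_eq_square algebra_simps)
    have g: "0 \<le> g z" "g z \<le> 1" and kg: "0 \<le> 1 + k * g z" "1 + k * g z \<le> 1 + k"
      using g_range[OF that] \<open>0 \<le> k\<close> mult_left_le[of "g z" k] by auto
    show "0 \<le> X z" "(g z)\<^sup>2 \<le> 1"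
      using g kg by (simp_all add: X_eq power_le_one)
    show "X z \<le> 1 + k"
      using mult_mono[OF g(2) kg(2) _ kg(1)] by (simp add: X_eq)
    show "(X z)\<^sup>2 \<le> (1 + k)\<^sup>2 * (g z)\<^sup>2"
      using power_mono[OF kg(2) kg(1), of 2] g
      by (simp add: X_eq power_mult_distrib mult.commute mult_left_mono)
  qed
  have X_meas[measurable]: "X \<in> borel_measurable M"
    unfolding X_def[abs_def] by measurable
  have X_int: "integrable M X"
    using X_bound by (intro integrable_const_bound[where B="1 + k"] AE_I2) auto
  have X2_int: "integrable M (\<lambda>z. (X z)\<^sup>2)"
    using X_bound order.trans[OF X_bound(3) mult_left_le[OF X_bound(4)]]
    by (intro integrable_const_bound[where B="(1 + k)\<^sup>2"] AE_I2) auto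
  have g2_int: "integrable M (\<lambda>z. (g z)\<^sup>2)"
    using X_bound by (intro integrable_const_bound[where B=1] AE_I2) auto
  have "variance X \<le> expectation (\<lambda>z. (X z)\<^sup>2)"
    using variance_eq[OF X_int X2_int] by simp
  also have "\<dots> \<le> expectation (\<lambda>z. (1 + k)\<^sup>2 * (g z)\<^sup>2)"
    using g2_int X_bound(3) by (intro integral_mono X2_int) auto
  finally show ?thesis
    by (simp add: X_def[abs_def])
qed

lemma Chebyshev_bound_le_half:
  fixes c2 h t q :: real and m :: nat
  defines "k \<equiv> c2 * h\<^sup>2"
  assumes "0 < c2" "0 < h" "h \<le> 1" "1 \<le> m" "0 \<le> q"
    and t: "(1 + c2) * (1 + c2 * h\<^sup>2) / (real m * c2 * h\<^sup>2) \<le> t"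
  shows "0 < t" and "real m * ((1 + k)\<^sup>2 * q) / (real m * (t / 2 + k * q))\<^sup>2 \<le> 1 / 2"
proof -
  have m: "0 < real m" and k: "0 < k" "k \<le> c2"
    using assms by (auto simp: k_def power_le_one mult_left_le)
  have "(1 + c2) * (1 + k) \<le> t * (real m * k)"
    using t m k by (simp add: k_def pos_divide_le_eq mult.assoc)
  moreover have "(1 + k) * (1 + k) \<le> (1 + c2) * (1 + k)"
    using k by (intro mult_right_mono) auto
  ultimately have tk: "(1 + k)\<^sup>2 \<le> real m * t * k"
    by (simp add: power2_eq_square algebra_simps)
  moreover have "0 < (1 + k)\<^sup>2"
    using k by simp
  ultimately have "0 < real m * t * k"
    by linarith
  then show "0 < t"
    using m k by (simp add: zero_less_mult_iff)
  have am_gm: "2 * t * k * q \<le> (t / 2 + k * q)\<^sup>2"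
    using zero_le_power2[of "t / 2 - k * q"] by (simp add: power2_eq_square algebra_simps)
  have "2 * (real m * ((1 + k)\<^sup>2 * q)) \<le> 2 * real m * (real m * t * k * q)"
    using mult_left_mono[OF mult_right_mono[OF tk \<open>0 \<le> q\<close>], of "2 * real m"] m
    by (simp add: mult.assoc)
  also have "\<dots> \<le> real m * (real m * (t / 2 + k * q)\<^sup>2)"
    using am_gm m by (simp add: algebra_simps)
  also have "\<dots> = (real m * (t / 2 + k * q))\<^sup>2"
    by (simp add: power2_eq_square)
  finally show "real m * ((1 + k)\<^sup>2 * q) / (real m * (t / 2 + k * q))\<^sup>2 \<le> 1 / 2"
    unfolding divide_le_eq by auto
qed

lemma ghost_sample_bound:
  fixes D :: "'a measure" and g :: "'a \<Rightarrow> real"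
  assumes D: "prob_space D" and g_meas[measurable]: "g \<in> borel_measurable D"
    and g_range: "\<And>z. z \<in> space D \<Longrightarrow> 0 \<le> g z \<and> g z \<le> 1"
    and "0 < c2" "0 < h" "h \<le> 1" "1 \<le> m"
    and t: "(1 + c2) * (1 + c2 * h\<^sup>2) / (real m * c2 * h\<^sup>2) \<le> t"
  shows "1 / 2 \<le> measure (sample_measure D m) {S \<in> space (sample_measure D m).
           risk D g - t / 2 \<le> emp_risk m S (\<lambda>z. (1 + c2) * g z - c2 * (1 - h\<^sup>2) * (g z)\<^sup>2)}"
proof -
  let ?M = "sample_measure D m"
  interpret D: prob_space D
    by (rule D)
  interpret M: prob_space ?M
    unfolding sample_measure_def by (rule prob_space_PiM) (rule D)
  define k where "k = c2 * h\<^sup>2"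
  define q where "q = D.expectation (\<lambda>z. (g z)\<^sup>2)"
  define X where "X z = g z + k * (g z)\<^sup>2" for z
  define s where "s = real m * (t / 2 + k * q)"
  have m: "0 < real m" and k: "0 < k" and q: "0 \<le> q"
    using assms by (auto simp: k_def q_def)
  have g2_le_g: "(g z)\<^sup>2 \<le> g z" if "z \<in> space D" for z
    using g_range[OF that] by (simp add: power2_eq_square mult_left_le)
  have X_meas[measurable]: "X \<in> borel_measurable D"
    unfolding X_def[abs_def] by measurable
  have X_bound: "\<bar>X z\<bar> \<le> 1 + k" if "z \<in> space D" for z
    using g_range[OF that] g2_le_g[OF that] k by (auto simp: X_def intro: add_mono mult_left_le)
  have "integrable D g" "integrable D (\<lambda>z. (g z)\<^sup>2)"
    using g_range by (auto intro!: D.integrable_const_bound[where B=1] AE_I2 power_le_one)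
  then have "D.expectation X = risk D g + k * q"
    by (simp add: X_def[abs_def] q_def risk_def)
  have "0 < s"
    using Chebyshev_bound_le_half(1)[OF assms(4-7) q t] m k q by (simp add: s_def add_pos_nonneg)
  let ?Bad = "{S \<in> space ?M. s \<le> \<bar>\<Sum>i<m. X (S i) - D.expectation X\<bar>}"
  have "measure ?M ?Bad \<le> real m * D.variance X / s\<^sup>2"
    by (rule D.Chebyshev_inequality_sample_sum[OF X_meas X_bound \<open>0 < s\<close>])
  also have "\<dots> \<le> real m * ((1 + k)\<^sup>2 * q) / s\<^sup>2"
    using D.variance_add_scaled_square_le[OF g_meas g_range, of k] k m
    by (auto simp: X_def[abs_def] q_def intro!: divide_right_mono mult_left_mono)
  also have "\<dots> \<le> 1 / 2"
    unfolding s_def k_def using Chebyshev_bound_le_half(2)[OF assms(4-7) q t] .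
  finally have "measure ?M ?Bad \<le> 1 / 2" .
  moreover have "space ?M - ?Bad \<subseteq> {S \<in> space ?M.
      risk D g - t / 2 \<le> emp_risk m S (\<lambda>z. (1 + c2) * g z - c2 * (1 - h\<^sup>2) * (g z)\<^sup>2)}"
  proof safe
    fix S assume S: "S \<in> space ?M" and "\<not> s \<le> \<bar>\<Sum>i<m. X (S i) - D.expectation X\<bar>"
    then have "real m * (risk D g - t / 2) \<le> (\<Sum>i<m. X (S i))"
      using \<open>D.expectation X = risk D g + k * q\<close> by (simp add: s_def sum_subtractf algebra_simps)
    also have "\<dots> \<le> (\<Sum>i<m. (1 + c2) * g (S i) - c2 * (1 - h\<^sup>2) * (g (S i))\<^sup>2)"
      using S g2_le_g \<open>0 < c2\<close>
      by (intro sum_mono) (auto simp: X_def k_def algebra_simps sample_measure_def space_PiM)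
    finally show "risk D g - t / 2 \<le> emp_risk m S (\<lambda>z. (1 + c2) * g z - c2 * (1 - h\<^sup>2) * (g z)\<^sup>2)"
      using m by (simp add: emp_risk_def pos_le_divide_eq mult.commute)
  qed
  then have "measure ?M (space ?M - ?Bad) \<le> measure ?M {S \<in> space ?M.
      risk D g - t / 2 \<le> emp_risk m S (\<lambda>z. (1 + c2) * g z - c2 * (1 - h\<^sup>2) * (g z)\<^sup>2)}"
    by (intro M.finite_measure_mono) (simp_all add: emp_risk_def)
  moreover have "measure ?M (space ?M - ?Bad) = 1 - measure ?M ?Bad"
    by (intro M.prob_compl) simp
  ultimately show ?thesis
    by simp
qed

section \<open>Symmetrization\<close>

definition swap_sample :: "nat \<Rightarrow> (nat \<Rightarrow> real) \<Rightarrow> (nat \<Rightarrow> 'a) \<Rightarrow> (nat \<Rightarrow> 'a) \<Rightarrow> nat \<Rightarrow> 'a" where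
  "swap_sample m \<epsilon> S S' = (\<lambda>i\<in>{..<m}. if \<epsilon> i = 1 then S' i else S i)"

definition signed_emp_risk :: "nat \<Rightarrow> (nat \<Rightarrow> 'a) \<Rightarrow> (nat \<Rightarrow> real) \<Rightarrow> ('a \<Rightarrow> real) \<Rightarrow> real" where
  "signed_emp_risk m S \<epsilon> b = (\<Sum>i<m. \<epsilon> i * b (S i)) / real m"

definition sign_flip :: "nat \<Rightarrow> (nat \<Rightarrow> real) \<Rightarrow> nat \<Rightarrow> real" where
  "sign_flip m \<epsilon> = (\<lambda>i\<in>{..<m}. - \<epsilon> i)"

lemma measurable_sign_flip:
  "sign_flip m \<in> measurable (rademacher_measure m) (rademacher_measure m)"
  unfolding sign_flip_def rademacher_measure_def
  by (intro measurable_restrict measurable_compose[OF measurable_component_singleton, where g=uminus])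
    simp_all

lemma distr_sign_flip:
  "distr (rademacher_measure m) (rademacher_measure m) (sign_flip m) = rademacher_measure m"
proof -
  let ?p = "pmf_of_set {-1, 1::real}"
  have "distr (measure_pmf ?p) (measure_pmf ?p) uminus = distr (measure_pmf ?p) (count_space UNIV) uminus"
    by (rule distr_cong) auto
  also have "\<dots> = measure_pmf (map_pmf uminus ?p)"
    by (simp add: map_pmf_rep_eq)
  also have "map_pmf uminus ?p = ?p"
    by (subst map_pmf_of_set_inj) (auto simp: inj_on_def insert_commute)
  finally have flip: "distr (measure_pmf ?p) (measure_pmf ?p) uminus = measure_pmf ?p" .
  have "distr (rademacher_measure m) (rademacher_measure m) (compose {..<m} uminus)
     = PiM {..<m} (\<lambda>i. distr (measure_pmf ?p) (measure_pmf ?p) uminus)"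
    unfolding rademacher_measure_def
    by (rule distr_PiM_finite_prob_space') (auto simp: prob_space_measure_pmf)
  moreover have "compose {..<m} uminus = sign_flip m"
    by (simp add: compose_def sign_flip_def fun_eq_iff)
  ultimately show ?thesis
    by (simp add: flip flip: rademacher_measure_def)
qed

lemma measurable_swap_sample:
  fixes D :: "'a measure" and m :: nat and \<sigma> :: "(nat \<Rightarrow> real) \<Rightarrow> nat \<Rightarrow> real"
  defines "M \<equiv> sample_measure D m" and "R \<equiv> rademacher_measure m"
  assumes \<sigma>_meas: "\<sigma> \<in> measurable R R"
  shows "(\<lambda>(\<epsilon>, S, S'). (swap_sample m (\<sigma> \<epsilon>) S S', \<sigma> \<epsilon>)) \<in> measurable (R \<Otimes>\<^sub>M (M \<Otimes>\<^sub>M M)) (M \<Otimes>\<^sub>M R)"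
  using \<sigma>_meas unfolding swap_sample_def M_def R_def sample_measure_def rademacher_measure_def
  by measurable

lemma distr_swap_sample:
  fixes D :: "'a measure" and m :: nat and \<sigma> :: "(nat \<Rightarrow> real) \<Rightarrow> nat \<Rightarrow> real"
  defines "M \<equiv> sample_measure D m" and "R \<equiv> rademacher_measure m"
  assumes D: "prob_space D"
    and \<sigma>_meas[measurable]: "\<sigma> \<in> measurable R R" and \<sigma>_distr: "distr R R \<sigma> = R"
  shows "distr (R \<Otimes>\<^sub>M (M \<Otimes>\<^sub>M M)) (M \<Otimes>\<^sub>M R)
           (\<lambda>(\<epsilon>, S, S'). (swap_sample m (\<sigma> \<epsilon>) S S', \<sigma> \<epsilon>)) = M \<Otimes>\<^sub>M R"
proof -
  have M: "prob_space M" and R: "prob_space R"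
    unfolding M_def R_def sample_measure_def rademacher_measure_def
    by (auto intro!: prob_space_PiM D prob_space_measure_pmf)
  then have "prob_space (M \<Otimes>\<^sub>M M)"
    using prob_space_pair by blast
  have F_eq: "(\<lambda>(\<epsilon>, S, S'). (swap_sample m (\<sigma> \<epsilon>) S S', \<sigma> \<epsilon>))
      = (\<lambda>(\<epsilon>, x). (case_prod (swap_sample m (\<sigma> \<epsilon>)) x, \<sigma> \<epsilon>))"
    by (simp add: fun_eq_iff split_beta')
  have "(\<lambda>(\<epsilon>, S, S'). (swap_sample m (\<sigma> \<epsilon>) S S', \<sigma> \<epsilon>)) \<in> measurable (R \<Otimes>\<^sub>M (M \<Otimes>\<^sub>M M)) (M \<Otimes>\<^sub>M R)"
    unfolding M_def R_def by (rule measurable_swap_sample) (use \<sigma>_meas R_def in simp)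
  moreover have "distr (M \<Otimes>\<^sub>M M) M (case_prod (swap_sample m (\<sigma> \<epsilon>))) = M" for \<epsilon>
    using distr_PiM_swap_coordinates[OF D, of "{..<m}" "{i. \<sigma> \<epsilon> i = 1}"]
    by (simp add: M_def sample_measure_def swap_sample_def[abs_def])
  ultimately show ?thesis
    unfolding F_eq using M R \<open>prob_space (M \<Otimes>\<^sub>M M)\<close>
    by (intro distr_pair_measure_fiberwise \<sigma>_meas \<sigma>_distr) (auto simp: prob_space_imp_sigma_finite)
qed

lemma signed_emp_risk_swap_sample:
  fixes b f :: "'a \<Rightarrow> real"
  assumes \<epsilon>: "\<epsilon> \<in> {..<m} \<rightarrow>\<^sub>E {-1, 1}"
  shows "(signed_emp_risk m (swap_sample m \<epsilon> S S') \<epsilon> b - \<kappa> * emp_risk m (swap_sample m \<epsilon> S S') f)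
       + (signed_emp_risk m (swap_sample m (sign_flip m \<epsilon>) S S') (sign_flip m \<epsilon>) b
          - \<kappa> * emp_risk m (swap_sample m (sign_flip m \<epsilon>) S S') f)
       = emp_risk m S' (\<lambda>z. b z - \<kappa> * f z) - emp_risk m S (\<lambda>z. b z + \<kappa> * f z)"
    (is "?lhs = ?rhs")
proof -
  let ?U = "swap_sample m \<epsilon> S S'" and ?V = "swap_sample m (sign_flip m \<epsilon>) S S'"
  have "?lhs = (\<Sum>i<m. \<epsilon> i * b (?U i) - \<kappa> * f (?U i)
      + (sign_flip m \<epsilon> i * b (?V i) - \<kappa> * f (?V i))) / real m"
    unfolding signed_emp_risk_def emp_risk_def
    by (simp add: sum.distrib sum_subtractf sum_distrib_left diff_divide_distrib add_divide_distrib)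
  also have "\<dots> = (\<Sum>i<m. (b (S' i) - \<kappa> * f (S' i)) - (b (S i) + \<kappa> * f (S i))) / real m"
    using \<epsilon> by (intro arg_cong[where f="\<lambda>x. x / real m"] sum.cong)
      (auto simp: swap_sample_def sign_flip_def PiE_iff)
  also have "\<dots> = ?rhs"
    unfolding emp_risk_def
    by (simp add: sum.distrib sum_subtractf sum_distrib_left diff_divide_distrib add_divide_distrib)
  finally show ?thesis .
qed

lemma swap_sample_SUP_ge:
  fixes L :: "'g \<Rightarrow> real" and b f :: "'g \<Rightarrow> 'a \<Rightarrow> real"
  assumes \<epsilon>: "\<epsilon> \<in> {..<m} \<rightarrow>\<^sub>E {-1, 1}" and g: "g \<in> G"
    and S: "t - 2 * \<delta> < L g - emp_risk m S (\<lambda>z. b g z + \<kappa> * f g z)"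
    and S': "L g - t / 2 \<le> emp_risk m S' (\<lambda>z. b g z - \<kappa> * f g z)"
  shows "ereal (t / 4 - \<delta>) \<le> (SUP g\<in>G. ereal (signed_emp_risk m (swap_sample m \<epsilon> S S') \<epsilon> (b g)
            - \<kappa> * emp_risk m (swap_sample m \<epsilon> S S') (f g)))
       \<or> ereal (t / 4 - \<delta>) \<le> (SUP g\<in>G. ereal (signed_emp_risk m (swap_sample m (sign_flip m \<epsilon>) S S')
            (sign_flip m \<epsilon>) (b g) - \<kappa> * emp_risk m (swap_sample m (sign_flip m \<epsilon>) S S') (f g)))"
proof -
  let ?U = "swap_sample m \<epsilon> S S'" and ?V = "swap_sample m (sign_flip m \<epsilon>) S S'"
  have "t / 2 - 2 * \<delta> < (signed_emp_risk m ?U \<epsilon> (b g) - \<kappa> * emp_risk m ?U (f g))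
      + (signed_emp_risk m ?V (sign_flip m \<epsilon>) (b g) - \<kappa> * emp_risk m ?V (f g))"
    using signed_emp_risk_swap_sample[OF \<epsilon>, of S S' "b g" \<kappa> "f g"] S S' by simp
  then have "t / 4 - \<delta> \<le> signed_emp_risk m ?U \<epsilon> (b g) - \<kappa> * emp_risk m ?U (f g)
      \<or> t / 4 - \<delta> \<le> signed_emp_risk m ?V (sign_flip m \<epsilon>) (b g) - \<kappa> * emp_risk m ?V (f g)"
    by linarith
  then show ?thesis
    using g by (auto intro: SUP_upper2)
qed

lemma emeasure_rademacher_signs:
  "emeasure (rademacher_measure m) ({..<m} \<rightarrow>\<^sub>E {-1, 1}) = 1"
proof -
  interpret product_prob_space "\<lambda>_::nat. measure_pmf (pmf_of_set {-1, 1::real})"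
    by (rule product_prob_spaceI) (rule prob_space_measure_pmf)
  show ?thesis
    by (simp add: rademacher_measure_def emeasure_PiM emeasure_pmf_of_set)
qed

lemma emeasure_swap_sample_preimages:
  fixes D :: "'a measure" and m :: nat and B :: "((nat \<Rightarrow> 'a) \<times> (nat \<Rightarrow> real)) set"
  defines "C \<equiv> {(\<epsilon>, S, S') \<in> space (rademacher_measure m \<Otimes>\<^sub>M (sample_measure D m \<Otimes>\<^sub>M sample_measure D m)).
      (swap_sample m \<epsilon> S S', \<epsilon>) \<in> B \<or> (swap_sample m (sign_flip m \<epsilon>) S S', sign_flip m \<epsilon>) \<in> B}"
  assumes D: "prob_space D" and B: "B \<in> sets (sample_measure D m \<Otimes>\<^sub>M rademacher_measure m)"
  shows "C \<in> sets (rademacher_measure m \<Otimes>\<^sub>M (sample_measure D m \<Otimes>\<^sub>M sample_measure D m))"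
    and "emeasure (rademacher_measure m \<Otimes>\<^sub>M (sample_measure D m \<Otimes>\<^sub>M sample_measure D m)) C
      \<le> 2 * emeasure (sample_measure D m \<Otimes>\<^sub>M rademacher_measure m) B"
proof -
  let ?M = "sample_measure D m" and ?R = "rademacher_measure m"
  let ?T = "?R \<Otimes>\<^sub>M (?M \<Otimes>\<^sub>M ?M)"
  define F1 where "F1 = (\<lambda>(\<epsilon>, S :: nat \<Rightarrow> 'a, S'). (swap_sample m \<epsilon> S S', \<epsilon>))"
  define F2 where "F2 = (\<lambda>(\<epsilon>, S :: nat \<Rightarrow> 'a, S'). (swap_sample m (sign_flip m \<epsilon>) S S', sign_flip m \<epsilon>))"
  have F1_meas: "F1 \<in> measurable ?T (?M \<Otimes>\<^sub>M ?R)" and F2_meas: "F2 \<in> measurable ?T (?M \<Otimes>\<^sub>M ?R)"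
    using measurable_swap_sample[where \<sigma>="\<lambda>\<epsilon>. \<epsilon>"] measurable_swap_sample[OF measurable_sign_flip]
    by (simp_all add: F1_def F2_def)
  have C_eq: "C = F1 -` B \<inter> space ?T \<union> F2 -` B \<inter> space ?T"
    by (auto simp: C_def F1_def F2_def)
  show "C \<in> sets ?T"
    unfolding C_eq using F1_meas F2_meas B by (intro sets.Un measurable_sets)
  have preimage: "emeasure ?T (F -` B \<inter> space ?T) = emeasure (?M \<Otimes>\<^sub>M ?R) B"
    if "F \<in> measurable ?T (?M \<Otimes>\<^sub>M ?R)" "distr ?T (?M \<Otimes>\<^sub>M ?R) F = ?M \<Otimes>\<^sub>M ?R" for F
    using emeasure_distr[OF that(1) B] that(2) by simp
  have "emeasure ?T (F1 -` B \<inter> space ?T) = emeasure (?M \<Otimes>\<^sub>M ?R) B"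
    using distr_swap_sample[OF D, where \<sigma>="\<lambda>\<epsilon>. \<epsilon>"] by (intro preimage F1_meas) (simp add: F1_def)
  moreover have "emeasure ?T (F2 -` B \<inter> space ?T) = emeasure (?M \<Otimes>\<^sub>M ?R) B"
    using distr_swap_sample[OF D measurable_sign_flip distr_sign_flip]
    by (intro preimage F2_meas) (simp add: F2_def)
  ultimately show "emeasure ?T C \<le> 2 * emeasure (?M \<Otimes>\<^sub>M ?R) B"
    unfolding C_eq using emeasure_subadditive F1_meas F2_meas B
    by (metis measurable_sets mult_2)
qed

lemma symmetrization_with_slack:
  fixes D :: "'a measure" and m :: nat and G :: "'g set" and L :: "'g \<Rightarrow> real"
    and b f :: "'g \<Rightarrow> 'a \<Rightarrow> real" and \<kappa> :: real
  defines "M \<equiv> sample_measure D m" and "R \<equiv> rademacher_measure m"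
    and "\<Phi> \<equiv> \<lambda>S. SUP g\<in>G. ereal (L g - emp_risk m S (\<lambda>z. b g z + \<kappa> * f g z))"
    and "\<Psi> \<equiv> \<lambda>S \<epsilon>. SUP g\<in>G. ereal (signed_emp_risk m S \<epsilon> (b g) - \<kappa> * emp_risk m S (f g))"
  assumes D: "prob_space D"
    and ghost: "\<And>g. g \<in> G \<Longrightarrow>
      1 / 2 \<le> measure M {S' \<in> space M. L g - t / 2 \<le> emp_risk m S' (\<lambda>z. b g z - \<kappa> * f g z)}"
    and \<Phi>_meas: "\<Phi> \<in> borel_measurable M" and \<Psi>_meas: "case_prod \<Psi> \<in> borel_measurable (M \<Otimes>\<^sub>M R)"
    and "0 < \<delta>"
  shows "measure M {S \<in> space M. ereal t \<le> \<Phi> S}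
    \<le> 4 * measure (M \<Otimes>\<^sub>M R) {p \<in> space (M \<Otimes>\<^sub>M R). ereal (t / 4 - \<delta>) \<le> case_prod \<Psi> p}"
proof -
  interpret M: prob_space M
    unfolding M_def sample_measure_def by (rule prob_space_PiM) (rule D)
  interpret R: prob_space R
    unfolding R_def rademacher_measure_def by (rule prob_space_PiM) (rule prob_space_measure_pmf)
  interpret MR: pair_prob_space M R ..
  let ?T = "R \<Otimes>\<^sub>M (M \<Otimes>\<^sub>M M)"
  define A where "A = {S \<in> space M. ereal t \<le> \<Phi> S}"
  define B where "B = {p \<in> space (M \<Otimes>\<^sub>M R). ereal (t / 4 - \<delta>) \<le> case_prod \<Psi> p}"
  define C where "C = {(\<epsilon>, S, S') \<in> space ?T. (swap_sample m \<epsilon> S S', \<epsilon>) \<in> B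
    \<or> (swap_sample m (sign_flip m \<epsilon>) S S', sign_flip m \<epsilon>) \<in> B}"
  define E where "E = {..<m} \<rightarrow>\<^sub>E {-1, 1::real}"
  have A_sets: "A \<in> sets M" and B_sets: "B \<in> sets (M \<Otimes>\<^sub>M R)"
    using \<Phi>_meas \<Psi>_meas unfolding A_def B_def by measurable
  have C_sets: "C \<in> sets ?T" and C_upper: "emeasure ?T C \<le> 2 * emeasure (M \<Otimes>\<^sub>M R) B"
    using emeasure_swap_sample_preimages[OF D B_sets[unfolded M_def R_def]]
    unfolding C_def M_def R_def by simp_all
  have half_section: "ennreal (1 / 2) \<le> emeasure M (Pair S -` Pair \<epsilon> -` C)" if "S \<in> A" "\<epsilon> \<in> E" for S \<epsilon>
  proof -
    have S: "S \<in> space M" and "ereal (t - 2 * \<delta>) < \<Phi> S"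
      using \<open>S \<in> A\<close> \<open>0 < \<delta>\<close> by (auto simp: A_def intro: less_le_trans[of _ "ereal t"])
    \<comment> \<open>The supremum need not be attained, hence the slack \<delta>.\<close>
    then obtain g where g: "g \<in> G" and g_large: "t - 2 * \<delta> < L g - emp_risk m S (\<lambda>z. b g z + \<kappa> * f g z)"
      by (auto simp: \<Phi>_def less_SUP_iff)
    have "\<epsilon> \<in> space R" and "sign_flip m \<epsilon> \<in> space R"
      using \<open>\<epsilon> \<in> E\<close> measurable_space[OF measurable_sign_flip, of \<epsilon> m]
      by (auto simp: E_def R_def rademacher_measure_def space_PiM PiE_iff)
    moreover have "swap_sample m \<epsilon>' S S' \<in> space M" if "S' \<in> space M" for \<epsilon>' S'
      using S that by (auto simp: M_def sample_measure_def space_PiM swap_sample_def PiE_iff)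
    ultimately have "{S' \<in> space M. L g - t / 2 \<le> emp_risk m S' (\<lambda>z. b g z - \<kappa> * f g z)}
        \<subseteq> Pair S -` Pair \<epsilon> -` C"
      using swap_sample_SUP_ge[where L=L and b=b and f=f, OF _ g g_large] \<open>\<epsilon> \<in> E\<close> S
      by (auto simp: C_def B_def E_def \<Psi>_def space_pair_measure)
    then have "emeasure M {S' \<in> space M. L g - t / 2 \<le> emp_risk m S' (\<lambda>z. b g z - \<kappa> * f g z)}
        \<le> emeasure M (Pair S -` Pair \<epsilon> -` C)"
      by (intro emeasure_mono sets_Pair1[OF sets_Pair1[OF C_sets]])
    then have "1 / 2 \<le> measure M (Pair S -` Pair \<epsilon> -` C)"
      using ghost[OF g] by (simp add: M.emeasure_eq_measure)
    then show ?thesis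
      unfolding M.emeasure_eq_measure by (rule ennreal_leI)
  qed
  have "E \<in> sets R"
    by (auto simp: E_def R_def rademacher_measure_def intro!: sets_PiM_I_finite)
  then have "ennreal (1 / 2) * emeasure M A * emeasure R E \<le> emeasure ?T C"
    by (rule emeasure_pair_measure_ge_iterated_section_bound[OF M.sigma_finite_measure_axioms
          M.sigma_finite_measure_axioms C_sets A_sets _ half_section])
  then have "ennreal (1 / 2) * emeasure M A \<le> emeasure ?T C"
    using emeasure_rademacher_signs[of m] by (simp add: E_def R_def)
  then have "ennreal (1 / 2) * emeasure M A \<le> 2 * emeasure (M \<Otimes>\<^sub>M R) B"
    using C_upper by (rule order.trans)
  moreover have "ennreal (1 / 2) * emeasure M A = ennreal (1 / 2 * measure M A)"
    by (subst ennreal_mult) (auto simp: M.emeasure_eq_measure)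
  moreover have "2 * emeasure (M \<Otimes>\<^sub>M R) B = ennreal (2 * measure (M \<Otimes>\<^sub>M R) B)"
    by (subst ennreal_mult) (auto simp: MR.emeasure_eq_measure)
  ultimately have "1 / 2 * measure M A \<le> 2 * measure (M \<Otimes>\<^sub>M R) B"
    by (simp add: measure_nonneg)
  then show ?thesis
    by (simp add: A_def B_def)
qed

lemma symmetrization:
  fixes D :: "'a measure" and m :: nat and G :: "'g set" and L :: "'g \<Rightarrow> real"
    and b f :: "'g \<Rightarrow> 'a \<Rightarrow> real" and \<kappa> :: real
  defines "M \<equiv> sample_measure D m" and "R \<equiv> rademacher_measure m"
    and "\<Phi> \<equiv> \<lambda>S. SUP g\<in>G. ereal (L g - emp_risk m S (\<lambda>z. b g z + \<kappa> * f g z))"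
    and "\<Psi> \<equiv> \<lambda>S \<epsilon>. SUP g\<in>G. ereal (signed_emp_risk m S \<epsilon> (b g) - \<kappa> * emp_risk m S (f g))"
  assumes D: "prob_space D"
    and ghost: "\<And>g. g \<in> G \<Longrightarrow>
      1 / 2 \<le> measure M {S' \<in> space M. L g - t / 2 \<le> emp_risk m S' (\<lambda>z. b g z - \<kappa> * f g z)}"
    and \<Phi>_meas: "\<Phi> \<in> borel_measurable M" and \<Psi>_meas: "case_prod \<Psi> \<in> borel_measurable (M \<Otimes>\<^sub>M R)"
  shows "measure M {S \<in> space M. ereal t \<le> \<Phi> S}
    \<le> 4 * measure (M \<Otimes>\<^sub>M R) {p \<in> space (M \<Otimes>\<^sub>M R). ereal (t / 4) \<le> case_prod \<Psi> p}"
proof -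
  have "prob_space (M \<Otimes>\<^sub>M R)"
    unfolding M_def R_def sample_measure_def rademacher_measure_def
    by (intro prob_space_pair prob_space_PiM D prob_space_measure_pmf)
  then have fin: "finite_measure (M \<Otimes>\<^sub>M R)"
    by (simp add: prob_space_def)
  have slack: "measure M {S \<in> space M. ereal t \<le> \<Phi> S} / 4
      \<le> measure (M \<Otimes>\<^sub>M R) {p \<in> space (M \<Otimes>\<^sub>M R). ereal (t / 4 - \<delta>) \<le> case_prod \<Psi> p}"
    if "0 < \<delta>" for \<delta>
    using symmetrization_with_slack[OF D ghost[unfolded M_def] \<Phi>_meas[unfolded M_def \<Phi>_def]
        \<Psi>_meas[unfolded M_def R_def \<Psi>_def] that]
    unfolding M_def R_def \<Phi>_def \<Psi>_def by simp
  show ?thesis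
    using measure_ereal_ge_le_of_slack[OF fin \<Psi>_meas slack] by simp
qed

lemma emp_risk_linear:
  "emp_risk m S (\<lambda>z. \<alpha> * f z - \<beta> * g z) = \<alpha> * emp_risk m S f - \<beta> * emp_risk m S g"
  by (simp add: emp_risk_def sum_subtractf sum_distrib_left diff_divide_distrib)

theorem mainTheorem6:
  fixes D :: "'a measure" and G :: "('a \<Rightarrow> real) set"
    and c c2 h t :: real and m :: nat
  assumes "prob_space D"
    and G_meas: "\<And>g. g \<in> G \<Longrightarrow> g \<in> borel_measurable D"
    and G_range: "\<And>g z. g \<in> G \<Longrightarrow> z \<in> space D \<Longrightarrow> 0 \<le> g z \<and> g z \<le> 1"
    and "c > c2" and "c2 > 0" and "0 < h" and "h \<le> 1"
    and "m \<ge> 1"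
    and "t \<ge> (1 + c2) * (1 + c2 * h^2) / (real m * c2 * h^2)"
    and meas1: "(\<lambda>S. SUP g\<in>G. ereal (risk D g - (1 + c) * emp_risk m S g
                   + c * (1 - h^2) * emp_risk m S (\<lambda>z. (g z)^2)))
               \<in> borel_measurable (sample_measure D m)"
    and meas2: "(\<lambda>(S, \<epsilon>). SUP g\<in>G. ereal ((\<Sum>i<m. \<epsilon> i * ((1 + (c + c2) / 2) * g (S i)
                   - (c + c2) / 2 * (1 - h^2) * (g (S i))^2)) / real m
                   - (c - c2) / 2 * emp_risk m S (\<lambda>z. g z - (1 - h^2) * (g z)^2)))
               \<in> borel_measurable (sample_measure D m \<Otimes>\<^sub>M rademacher_measure m)"
  shows "1/4 * measure (sample_measure D m)
            {S \<in> space (sample_measure D m).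
               (SUP g\<in>G. ereal (risk D g - (1 + c) * emp_risk m S g
                   + c * (1 - h^2) * emp_risk m S (\<lambda>z. (g z)^2))) \<ge> ereal t}
         \<le> measure (sample_measure D m \<Otimes>\<^sub>M rademacher_measure m)
            {(S, \<epsilon>) \<in> space (sample_measure D m \<Otimes>\<^sub>M rademacher_measure m).
               (SUP g\<in>G. ereal ((\<Sum>i<m. \<epsilon> i * ((1 + (c + c2) / 2) * g (S i)
                   - (c + c2) / 2 * (1 - h^2) * (g (S i))^2)) / real m
                   - (c - c2) / 2 * emp_risk m S (\<lambda>z. g z - (1 - h^2) * (g z)^2))) \<ge> ereal (t / 4)}"
proof -
  define b where "b g = (\<lambda>z. (1 + (c + c2) / 2) * g z - (c + c2) / 2 * (1 - h^2) * (g z)^2)"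
    for g :: "'a \<Rightarrow> real"
  define f where "f g = (\<lambda>z. g z - (1 - h^2) * (g z)^2)" for g :: "'a \<Rightarrow> real"
  have b_plus: "(\<lambda>z. b g z + (c - c2) / 2 * f g z) = (\<lambda>z. (1 + c) * g z - c * (1 - h^2) * (g z)^2)"
    and b_minus: "(\<lambda>z. b g z - (c - c2) / 2 * f g z) = (\<lambda>z. (1 + c2) * g z - c2 * (1 - h^2) * (g z)^2)"
    for g by (simp_all add: fun_eq_iff b_def f_def field_simps)
  have \<Phi>_eq: "risk D g - emp_risk m S (\<lambda>z. b g z + (c - c2) / 2 * f g z)
      = risk D g - (1 + c) * emp_risk m S g + c * (1 - h^2) * emp_risk m S (\<lambda>z. (g z)^2)" for g S
    unfolding b_plus by (simp add: emp_risk_linear)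
  have \<Psi>_eq: "signed_emp_risk m S \<epsilon> (b g) - (c - c2) / 2 * emp_risk m S (f g)
      = (\<Sum>i<m. \<epsilon> i * ((1 + (c + c2) / 2) * g (S i) - (c + c2) / 2 * (1 - h^2) * (g (S i))^2)) / real m
        - (c - c2) / 2 * emp_risk m S (\<lambda>z. g z - (1 - h^2) * (g z)^2)" for g S \<epsilon>
    by (simp add: signed_emp_risk_def b_def f_def)
  have ghost: "1 / 2 \<le> measure (sample_measure D m) {S' \<in> space (sample_measure D m).
      risk D g - t / 2 \<le> emp_risk m S' (\<lambda>z. b g z - (c - c2) / 2 * f g z)}" if "g \<in> G" for g
    unfolding b_minus
    using ghost_sample_bound[OF \<open>prob_space D\<close> G_meas[OF that] G_range[OF that] assms(5-9)] .
  have "measure (sample_measure D m) {S \<in> space (sample_measure D m).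
        ereal t \<le> (SUP g\<in>G. ereal (risk D g - emp_risk m S (\<lambda>z. b g z + (c - c2) / 2 * f g z)))}
    \<le> 4 * measure (sample_measure D m \<Otimes>\<^sub>M rademacher_measure m)
        {p \<in> space (sample_measure D m \<Otimes>\<^sub>M rademacher_measure m). ereal (t / 4) \<le> (case p of (S, \<epsilon>) \<Rightarrow>
          SUP g\<in>G. ereal (signed_emp_risk m S \<epsilon> (b g) - (c - c2) / 2 * emp_risk m S (f g)))}"
    using meas1 meas2
    by (intro symmetrization \<open>prob_space D\<close> ghost) (simp_all only: \<Phi>_eq \<Psi>_eq split_beta')
  then show ?thesis
    by (simp only: \<Phi>_eq \<Psi>_eq split_beta' case_prod_unfold) simp
qed

end
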